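(* Let $n\ge5$, let $\Delta$ be a non-singular $(d-1)$-complex on $[n-1]$ and $\Delta'$ a singular $(d-1)$-complex on $[n-1]$. Then there are no nonnegative integers $m_I$ with $D_\Delta=D_{\Delta'}+\sum_I m_IE_I$ in $\operatorname{Pic}(\overline{\mathcal M}_{0,n})$.
   Context: $\operatorname{Pic}(\overline{\mathcal M}_{0,n})=\mathbb ZH\oplus\bigoplus_I\mathbb ZE_I$ (sum over $I\subseteq[n-1]$, $1\le|I|\le n-4$) via a fixed Kapranov blow-up presentation $\overline{\mathcal M}_{0,n}\cong\operatorname{Bl}\mathbb P^{n-3}$. A $k$-simplex on $[n-1]$ is a multiset of cardinality $k+1$ with entries in $[n-1]$; a $k$-complex is a finite set of distinct $k$-simplices; a simplex is singular if some entry has multiplicity $\ge2$; a complex is singular if it contains a singular simplex, non-singular otherwise. For a $(d-1)$-complex $\Delta$, $D_\Delta=dH-\sum_I\big(d-\max_{\sigma\in\Delta}\sum_{i\in I}\operatorname{mult}_i(\sigma)\big)E_I$. *)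

theory Defs
  imports Main "HOL-Library.Multiset"
begin

definition E_index :: "nat \<Rightarrow> nat set set" where
  "E_index n = {I. I \<subseteq> {1..n-1} \<and> 1 \<le> card I \<and> card I \<le> n - 4}"

text \<open>An element of Pic(M_{0,n}) = Z H (+) (+)_I Z E_I, written as the pair
  (coefficient of H, coefficients of the E_I), with E-coefficient 0 off the index set.\<close>
type_synonym pic = "int \<times> (nat set \<Rightarrow> int)"

definition pic_add :: "pic \<Rightarrow> pic \<Rightarrow> pic" where
  "pic_add a b = (fst a + fst b, \<lambda>I. snd a I + snd b I)"

definition E_comb :: "nat \<Rightarrow> (nat set \<Rightarrow> int) \<Rightarrow> pic" where
  "E_comb n m = (0, \<lambda>I. if I \<in> E_index n then m I else 0)"

definition is_simplex :: "nat \<Rightarrow> nat \<Rightarrow> nat multiset \<Rightarrow> bool" where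
  "is_simplex n k \<sigma> \<longleftrightarrow> size \<sigma> = k + 1 \<and> set_mset \<sigma> \<subseteq> {1..n-1}"

definition is_complex :: "nat \<Rightarrow> nat \<Rightarrow> nat multiset set \<Rightarrow> bool" where
  "is_complex n k \<Delta> \<longleftrightarrow> finite \<Delta> \<and> \<Delta> \<noteq> {} \<and> (\<forall>\<sigma>\<in>\<Delta>. is_simplex n k \<sigma>)"

definition singular_simplex :: "nat multiset \<Rightarrow> bool" where
  "singular_simplex \<sigma> \<longleftrightarrow> (\<exists>i. count \<sigma> i \<ge> 2)"

definition singular_complex :: "nat multiset set \<Rightarrow> bool" where
  "singular_complex \<Delta> \<longleftrightarrow> (\<exists>\<sigma>\<in>\<Delta>. singular_simplex \<sigma>)"

definition D_class :: "nat \<Rightarrow> nat \<Rightarrow> nat multiset set \<Rightarrow> pic" where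
  "D_class n d \<Delta> = (int d, \<lambda>I. if I \<in> E_index n then
      - (int d - int (Max ((\<lambda>\<sigma>. \<Sum>i\<in>I. count \<sigma> i) ` \<Delta>))) else 0)"

end

theory Submission
  imports Defs
begin

text \<open>Let i be an entry of multiplicity at least 2 in some simplex of \<Delta>'. On the exceptional
  divisor E_{i}, the coefficient of D_\<Delta> is (max mult_i over \<Delta>) - d \<le> 1 - d, while that of
  D_\<Delta>' + \<Sum> m_I E_I is at least 2 - d + m_{i} \<ge> 2 - d.\<close>

lemma singleton_in_E_index:
  assumes "n \<ge> 5" and "i \<in> {1..n-1}"
  shows "{i} \<in> E_index n"
  using assms unfolding E_index_def by auto

lemma snd_D_class_singleton:
  assumes "{i} \<in> E_index n"
  shows "snd (D_class n d \<Delta>) {i} = int (Max ((\<lambda>\<sigma>. count \<sigma> i) ` \<Delta>)) - int d"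
  using assms unfolding D_class_def by simp

lemma snd_pic_add_E_comb:
  assumes "I \<in> E_index n"
  shows "snd (pic_add D (E_comb n m)) I = snd D I + m I"
  using assms unfolding pic_add_def E_comb_def by simp

lemma Max_count_le_one_if_not_singular:
  assumes "finite \<Delta>" and "\<Delta> \<noteq> {}" and "\<not> singular_complex \<Delta>"
  shows "Max ((\<lambda>\<sigma>. count \<sigma> i) ` \<Delta>) \<le> 1"
proof -
  have "count \<sigma> i \<le> 1" if "\<sigma> \<in> \<Delta>" for \<sigma>
    using assms(3) that unfolding singular_complex_def singular_simplex_def by (metis not_less_eq_eq one_add_one Suc_eq_plus1)
  then show ?thesis
    using assms(1,2) by simp
qed

lemma singular_complex_obtains_repeated_entry:
  assumes "is_complex n k \<Delta>" and "singular_complex \<Delta>"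
  obtains i where "i \<in> {1..n-1}" and "Max ((\<lambda>\<sigma>. count \<sigma> i) ` \<Delta>) \<ge> 2"
proof -
  from assms(2) obtain \<sigma> i where \<sigma>: "\<sigma> \<in> \<Delta>" and repeated: "count \<sigma> i \<ge> 2"
    unfolding singular_complex_def singular_simplex_def by blast
  have "i \<in># \<sigma>"
    using repeated by (metis count_eq_zero_iff not_numeral_le_zero)
  then have "i \<in> {1..n-1}"
    using \<sigma> assms(1) unfolding is_complex_def is_simplex_def by blast
  moreover have "Max ((\<lambda>\<sigma>. count \<sigma> i) ` \<Delta>) \<ge> 2"
    using \<sigma> repeated assms(1) unfolding is_complex_def
    by (meson Max_ge finite_imageI image_eqI order_trans)
  ultimately show thesis
    using that by blast
qed

theorem mainTheorem4:
  fixes n d :: nat and \<Delta> \<Delta>' :: "nat multiset set"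
  assumes "n \<ge> 5" and "d \<ge> 1"
    and "is_complex n (d - 1) \<Delta>" and "\<not> singular_complex \<Delta>"
    and "is_complex n (d - 1) \<Delta>'" and "singular_complex \<Delta>'"
  shows "\<not> (\<exists>m :: nat set \<Rightarrow> int. (\<forall>I \<in> E_index n. m I \<ge> 0) \<and>
            D_class n d \<Delta> = pic_add (D_class n d \<Delta>') (E_comb n m))"
proof
  assume "\<exists>m :: nat set \<Rightarrow> int. (\<forall>I \<in> E_index n. m I \<ge> 0) \<and>
            D_class n d \<Delta> = pic_add (D_class n d \<Delta>') (E_comb n m)"
  then obtain m :: "nat set \<Rightarrow> int" where m_nonneg: "\<forall>I \<in> E_index n. m I \<ge> 0"
    and eq: "D_class n d \<Delta> = pic_add (D_class n d \<Delta>') (E_comb n m)" by blast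
  obtain i where i: "i \<in> {1..n-1}" and singular_max: "Max ((\<lambda>\<sigma>. count \<sigma> i) ` \<Delta>') \<ge> 2"
    using singular_complex_obtains_repeated_entry assms(5,6) by blast
  have E_i: "{i} \<in> E_index n"
    using singleton_in_E_index assms(1) i by blast
  have nonsingular_max: "Max ((\<lambda>\<sigma>. count \<sigma> i) ` \<Delta>) \<le> 1"
    using Max_count_le_one_if_not_singular assms(3,4) unfolding is_complex_def by blast
  have "snd (D_class n d \<Delta>) {i} = snd (D_class n d \<Delta>') {i} + m {i}"
    using eq snd_pic_add_E_comb[OF E_i] by simp
  then show False
    using snd_D_class_singleton[OF E_i] singular_max nonsingular_max m_nonneg E_i by fastforce
qed

end
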